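(* Let $A\in\mathbb R^{n\times p}$ and $B\in\mathbb R^{n\times q}$ have columns $a_1,\dots,a_p$ and $b_1,\dots,b_q$ respectively. Let \[C=[a_1\circ b_1,\ a_1\circ b_2,\ \dots,\ a_2\circ b_1,\ \dots,\ a_p\circ b_q]\in\mathbb R^{n\times pq},\] \[\phi:\mathbb R^n\to\mathbb R^n,\ d\mapsto \operatorname{diag}(AA'\operatorname{diag}^*(d)BB'),\qquad \psi:\mathbb R^{p\times q}\to\mathbb R^n,\ \Delta\mapsto\operatorname{diag}(A\Delta B').\] Then $\mathcal R(\phi)=\mathcal R(\psi)=\mathcal R((AA')\circ(BB'))=\mathcal R(C)$.
   Context: $\circ$ denotes the entrywise (Schur) product of vectors or matrices. $\operatorname{diag}:\mathbb R^{n\times n}\to\mathbb R^n$ maps a matrix to the vector of its diagonal entries, and $\operatorname{diag}^*:\mathbb R^n\to\mathbb R^{n\times n}$ maps a vector $d$ to the diagonal matrix with diagonal $d$. $\mathcal R(\cdot)$ denotes the range (image) of a linear map or matrix. *)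

theory Defs
  imports "HOL-Analysis.Analysis"
begin

definition diag :: "real^'n^'n \<Rightarrow> real^'n" where
  "diag M = (\<chi> i. M $ i $ i)"

definition diag_star :: "real^'n \<Rightarrow> real^'n^'n" where
  "diag_star d = (\<chi> i j. if i = j then d $ i else 0)"

definition schur :: "real^'m^'n \<Rightarrow> real^'m^'n \<Rightarrow> real^'m^'n" where
  "schur M N = (\<chi> i j. M $ i $ j * N $ i $ j)"

definition mat_range :: "real^'m^'n \<Rightarrow> (real^'n) set" where
  "mat_range M = range (\<lambda>x. M *v x)"

definition khatri_C :: "real^'p^'n \<Rightarrow> real^'q^'n \<Rightarrow> real^('p \<times> 'q)^'n" where
  "khatri_C A B = (\<chi> i kl. A $ i $ fst kl * B $ i $ snd kl)"

definition phi_map :: "real^'p^'n \<Rightarrow> real^'q^'n \<Rightarrow> real^'n \<Rightarrow> real^'n" where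
  "phi_map A B d = diag ((A ** transpose A) ** diag_star d ** (B ** transpose B))"

definition psi_map :: "real^'p^'n \<Rightarrow> real^'q^'n \<Rightarrow> real^'q^'p \<Rightarrow> real^'n" where
  "psi_map A B \<Delta> = diag (A ** \<Delta> ** transpose B)"

end

theory Submission
  imports Defs
begin

text \<open>All three maps are matrix-vector products: \<open>\<phi>\<close> is multiplication by \<open>(AA') \<circ> (BB')\<close>,
  \<open>\<psi>\<close> is multiplication by \<open>C\<close> after reading \<open>\<Delta>\<close> as a vector indexed by \<open>p \<times> q\<close>, and
  \<open>(AA') \<circ> (BB') = CC'\<close>. The remaining equality is \<open>\<R>(MM') = \<R>(M)\<close>: a vector of \<open>\<R>(M)\<close>
  orthogonal to \<open>\<R>(MM')\<close> is annihilated by \<open>M'\<close>, hence is orthogonal to itself.\<close>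

lemma phi_map_eq_schur_mult:
  "phi_map A B d = schur (A ** transpose A) (B ** transpose B) *v d"
  unfolding phi_map_def diag_def diag_star_def schur_def
  apply (simp add: vec_eq_iff matrix_matrix_mult_def matrix_vector_mult_def transpose_def)
  apply (simp add: sum_distrib_right if_distrib if_distrib[of "\<lambda>x. x * _"] sum.If_cases
      cong: if_cong)
  apply (intro allI sum.cong refl)
  apply (simp add: mult_ac)
  done

lemma psi_map_eq_khatri_C_mult:
  "psi_map A B D = khatri_C A B *v (\<chi> kl. D $ fst kl $ snd kl)"
  unfolding psi_map_def diag_def khatri_C_def
  apply (simp add: vec_eq_iff matrix_matrix_mult_def matrix_vector_mult_def transpose_def)
  apply (simp add: sum_distrib_right sum_distrib_left sum.cartesian_product'
      flip: UNIV_Times_UNIV)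
  apply (subst sum.swap)
  apply (simp add: mult_ac)
  done

lemma khatri_C_mult_eq_psi_map:
  "khatri_C A B *v v = psi_map A B (\<chi> k l. v $ (k, l))"
  by (simp add: psi_map_eq_khatri_C_mult)

lemma schur_mult_transpose_eq_khatri_C_mult_transpose:
  "schur (A ** transpose A) (B ** transpose B) = khatri_C A B ** transpose (khatri_C A B)"
  unfolding schur_def khatri_C_def
  apply (simp add: vec_eq_iff matrix_matrix_mult_def matrix_vector_mult_def transpose_def)
  apply (simp add: sum_distrib_right sum_distrib_left sum.cartesian_product'
      flip: UNIV_Times_UNIV)
  apply (subst sum.swap)
  apply (simp add: mult_ac)
  done

lemma inner_mult_transpose_self:
  fixes M :: "real^'m^'n"
  shows "w \<bullet> ((M ** transpose M) *v w) = (transpose M *v w) \<bullet> (transpose M *v w)"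
  by (metis dot_lmul_matrix matrix_vector_mul_assoc transpose_matrix_vector)

lemma mat_range_mult_transpose:
  fixes M :: "real^'m^'n"
  shows "mat_range (M ** transpose M) = mat_range M"
proof
  show "mat_range (M ** transpose M) \<subseteq> mat_range M"
    unfolding mat_range_def by (auto simp flip: matrix_vector_mul_assoc)
next
  show "mat_range M \<subseteq> mat_range (M ** transpose M)"
  proof
    fix y assume "y \<in> mat_range M"
    then obtain x where y: "y = M *v x"
      unfolding mat_range_def by auto
    let ?S = "mat_range (M ** transpose M)"
    have "subspace ?S"
      unfolding mat_range_def using linear_subspace_image subspace_UNIV by blast
    then obtain z w where "z \<in> ?S" and w_orth: "\<And>v. v \<in> ?S \<Longrightarrow> orthogonal w v"
        and yzw: "y = z + w"
      using orthogonal_subspace_decomp_exists[of ?S y] by (metis span_eq_iff)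
    then obtain u where z: "z = M *v (transpose M *v u)"
      unfolding mat_range_def by (auto simp flip: matrix_vector_mul_assoc)
    have w: "w = M *v (x - transpose M *v u)"
      using yzw y z by (simp add: matrix_vector_mult_diff_distrib algebra_simps)
    have "orthogonal w ((M ** transpose M) *v w)"
      by (rule w_orth) (simp add: mat_range_def)
    then have "transpose M *v w = 0"
      by (simp add: orthogonal_def inner_mult_transpose_self)
    then have "w \<bullet> w = 0"
      using w by (metis dot_lmul_matrix inner_zero_left transpose_matrix_vector inner_commute)
    then show "y \<in> ?S"
      using yzw \<open>z \<in> ?S\<close> by simp
  qed
qed

theorem lemma6:
  fixes A :: "real^'p^'n" and B :: "real^'q^'n"
  shows "range (phi_map A B) = range (psi_map A B)
       \<and> range (psi_map A B) = mat_range (schur (A ** transpose A) (B ** transpose B))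
       \<and> mat_range (schur (A ** transpose A) (B ** transpose B)) = mat_range (khatri_C A B)"
proof -
  have phi: "range (phi_map A B) = mat_range (schur (A ** transpose A) (B ** transpose B))"
    unfolding mat_range_def phi_map_eq_schur_mult by simp
  have "range (psi_map A B) \<subseteq> mat_range (khatri_C A B)"
    unfolding mat_range_def psi_map_eq_khatri_C_mult by auto
  moreover have "mat_range (khatri_C A B) \<subseteq> range (psi_map A B)"
    unfolding mat_range_def khatri_C_mult_eq_psi_map by auto
  ultimately have psi: "range (psi_map A B) = mat_range (khatri_C A B)"
    by (rule subset_antisym)
  have schur: "mat_range (schur (A ** transpose A) (B ** transpose B)) = mat_range (khatri_C A B)"
    by (simp add: schur_mult_transpose_eq_khatri_C_mult_transpose mat_range_mult_transpose)
  show ?thesis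
    using phi psi schur by simp
qed

end
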